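(* Let $p\in(0,1]$ and let $f:\mathbb{Z}\to\mathbb{R}$ belong to $\ell^p(\mathbb{Z})$. Then $${\rm Var}_p Mf\leq \left(2\sum_{k=0}^{\infty}\frac{2^{p}}{(2k+1)^p(2k+3)^p}\right)^{1/p}\|f\|_{\ell^p(\mathbb{Z})}=:\mathbf{C}_p\|f\|_{\ell^p(\mathbb{Z})},$$ and the constant $\mathbf{C}_p$ is the best possible. Moreover, for $p\in(\frac12,1]$, a function $f\not\equiv 0$ attains equality if and only if $f$ is a delta function, i.e. $f=c\,\mathbf{1}_{\{m\}}$ for some $m\in\mathbb{Z}$ and $c\neq 0$.
   Context: For $f:\mathbb{Z}\to\mathbb{R}$, the centered discrete Hardy–Littlewood maximal function is $Mf(n)=\sup_{r\ge 0}\frac{1}{2r+1}\sum_{k=-r}^{r}|f(n+k)|$ ($r$ integer). $\|f\|_{\ell^p(\mathbb{Z})}=(\sum_{n\in\mathbb{Z}}|f(n)|^p)^{1/p}$ and ${\rm Var}_p g=\left(\sum_{n\in\mathbb{Z}}|g(n+1)-g(n)|^p\right)^{1/p}$. *)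

theory Defs
  imports "HOL-Analysis.Analysis"
begin

definition maxfun :: "(int \<Rightarrow> real) \<Rightarrow> int \<Rightarrow> real" where
  "maxfun f n = (SUP r::nat. (\<Sum>k\<in>{- int r..int r}. \<bar>f (n + k)\<bar>) / (2 * real r + 1))"

definition in_lp :: "real \<Rightarrow> (int \<Rightarrow> real) \<Rightarrow> bool" where
  "in_lp p f \<longleftrightarrow> (\<lambda>n. \<bar>f n\<bar> powr p) summable_on UNIV"

definition lpnorm :: "real \<Rightarrow> (int \<Rightarrow> real) \<Rightarrow> real" where
  "lpnorm p f = (\<Sum>\<^sub>\<infinity>n. \<bar>f n\<bar> powr p) powr (1 / p)"

definition varp :: "real \<Rightarrow> (int \<Rightarrow> real) \<Rightarrow> ereal" where
  "varp p g = (if (\<lambda>n. \<bar>g (n + 1) - g n\<bar> powr p) summable_on UNIV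
               then ereal ((\<Sum>\<^sub>\<infinity>n. \<bar>g (n + 1) - g n\<bar> powr p) powr (1 / p))
               else \<infinity>)"

text \<open>The constant C_p, equal to \<infinity> when the series diverges (i.e. p \<le> 1/2).\<close>
definition Cp :: "real \<Rightarrow> ereal" where
  "Cp p = (let a = (\<lambda>k::nat. 2 powr p / ((2 * real k + 1) powr p * (2 * real k + 3) powr p))
           in if summable a then ereal ((2 * suminf a) powr (1 / p)) else \<infinity>)"

end

theory Submission
  imports Defs
begin

(* The ball of radius r about n lies in the ball of radius r + 1 about n + 1 (and about n - 1),
   so the average of |f| over the first exceeds M f(n + 1) by at most
   gap r = 1/(2r+1) - 1/(2r+3) times the mass of |f| on it.  Raising this to the power p <= 1
   and using the subadditivity of t^p bounds |M f(n+1) - M f(n)|^p by a convolution of |f|^p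
   with the weights gap(.)^p, whose total mass over Z is C_p^p; summing over n gives the
   inequality.  The jumps of M of a delta function are exactly these weights, so deltas attain
   it.  If f has two nonzero values, then in each ball at most one point can use its full weight
   in the bound at a fixed n, so the other one leaves a positive slack there, and the inequality
   is strict whenever C_p is finite, i.e. p > 1/2. *)

lemma powr_add_le_add_powr:
  fixes a b p :: real
  assumes "0 < p" "p \<le> 1" "0 \<le> a" "0 \<le> b"
  shows "(a + b) powr p \<le> a powr p + b powr p"
proof (cases "a + b = 0")
  case True
  then show ?thesis using assms by simp
next
  case False
  then have ab: "0 < a + b" using assms by simp
  have "x / (a + b) \<le> (x / (a + b)) powr p" if "0 \<le> x" "x \<le> a + b" for x
    using powr_mono'[of p 1 "x / (a + b)"] assms that ab by simp
  then have "1 \<le> (a / (a + b)) powr p + (b / (a + b)) powr p"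
    using assms ab add_mono[of "a / (a + b)" _ "b / (a + b)"]
    by (simp add: add_divide_distrib[symmetric])
  also have "\<dots> = (a powr p + b powr p) / (a + b) powr p"
    using assms by (simp add: powr_divide add_divide_distrib)
  finally show ?thesis using ab by (simp add: field_simps)
qed

lemma powr_sum_le_sum_powr:
  fixes p :: real
  assumes "0 < p" "p \<le> 1" "finite A" "\<And>x. x \<in> A \<Longrightarrow> 0 \<le> g x"
  shows "(sum g A) powr p \<le> (\<Sum>x\<in>A. g x powr p)"
  using assms(3,4)
proof (induction A rule: finite_induct)
  case empty
  then show ?case by simp
next
  case (insert x F)
  have "(sum g (insert x F)) powr p \<le> g x powr p + (sum g F) powr p"
    using insert assms by (simp add: powr_add_le_add_powr sum_nonneg)
  also have "\<dots> \<le> g x powr p + (\<Sum>x\<in>F. g x powr p)"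
    using insert by simp
  finally show ?case using insert by simp
qed

lemma has_sum_delta: "((\<lambda>x. if x = a then c else 0) has_sum c) UNIV"
proof -
  have "((\<lambda>x. if x = a then c else 0) has_sum c) {a}"
    by (rule has_sum_finiteI) auto
  then show ?thesis
    by (subst has_sum_cong_neutral[where T = "{a}"]) auto
qed

lemma has_sum_shift:
  fixes g :: "'a::ab_group_add \<Rightarrow> 'b::topological_comm_monoid_add"
  shows "((\<lambda>x. g (x - a)) has_sum S) UNIV \<longleftrightarrow> (g has_sum S) UNIV"
proof -
  have "bij_betw (\<lambda>x. x - a) UNIV UNIV"
    by (rule bij_betw_byWitness[where f' = "\<lambda>x. x + a"]) auto
  then show ?thesis by (rule has_sum_reindex_bij_betw)
qed

lemma has_sum_convolution_nonneg:
  fixes w g :: "'a::ab_group_add \<Rightarrow> real"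
  assumes w: "(w has_sum W) UNIV" and g: "(g has_sum G) UNIV"
    and nonneg: "\<And>x. 0 \<le> w x" "\<And>x. 0 \<le> g x"
  shows "\<And>n. (\<lambda>m. w (n - m) * g m) summable_on UNIV"
    and "((\<lambda>n. \<Sum>\<^sub>\<infinity>m. w (n - m) * g m) has_sum W * G) UNIV"
proof -
  define F where "F = (\<lambda>(m, n). w (n - m) * g m)"
  have columns: "((\<lambda>n. F (m, n)) has_sum W * g m) UNIV" for m
    using has_sum_cmult_left[OF w[folded has_sum_shift[of w m]], of "g m"]
    by (simp add: F_def mult.commute)
  have "(F has_sum W * G) (UNIV \<times> UNIV)"
  proof (rule has_sum_SigmaI[OF columns])
    show "((\<lambda>m. W * g m) has_sum W * G) UNIV" by (rule has_sum_cmult_right[OF g])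
    then show "F summable_on UNIV \<times> UNIV"
      using nonneg by (intro summable_on_SigmaI[OF columns]) (auto simp: F_def has_sum_imp_summable)
  qed
  then have rows: "((\<lambda>(n, m). w (n - m) * g m) has_sum W * G) (UNIV \<times> UNIV)"
    by (subst has_sum_swap) (simp add: F_def)
  then have "(\<lambda>(n, m). w (n - m) * g m) summable_on UNIV \<times> UNIV"
    by (rule has_sum_imp_summable)
  then show inner: "(\<lambda>m. w (n - m) * g m) summable_on UNIV" for n
    by (rule summable_on_SigmaD1) simp
  show "((\<lambda>n. \<Sum>\<^sub>\<infinity>m. w (n - m) * g m) has_sum W * G) UNIV"
    using has_sum_SigmaD[OF rows] inner by auto
qed

definition gap :: "nat \<Rightarrow> real" where
  "gap k = 2 / ((2 * real k + 1) * (2 * real k + 3))"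

lemma gap_eq_diff: "gap k = 1 / (2 * real k + 1) - 1 / (2 * real k + 3)"
  by (simp add: gap_def field_simps)

lemma gap_pos: "0 < gap k"
  by (simp add: gap_def)

lemma gap_strict_antimono: "k < l \<Longrightarrow> gap l < gap k"
  unfolding gap_def
  by (rule divide_strict_left_mono) (auto intro!: mult_strict_mono simp: add_pos_pos)

lemma gap_powr_strict_antimono: "0 < p \<Longrightarrow> k < l \<Longrightarrow> gap l powr p < gap k powr p"
  by (simp add: gap_strict_antimono gap_pos powr_less_mono2 less_imp_le)

lemma gap_powr_antimono: "0 < p \<Longrightarrow> k \<le> l \<Longrightarrow> gap l powr p \<le> gap k powr p"
  using gap_powr_strict_antimono[of p k l] by (cases "k = l") auto

lemma Cp_eq:
  "Cp p = (if summable (\<lambda>k. gap k powr p)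
           then ereal ((2 * (\<Sum>k. gap k powr p)) powr (1 / p)) else \<infinity>)"
proof -
  have "2 powr p / ((2 * real k + 1) powr p * (2 * real k + 3) powr p) = gap k powr p" for k
    by (simp add: gap_def powr_divide powr_mult)
  then show ?thesis by (simp add: Cp_def)
qed

lemma summable_gap_powr:
  assumes "1 / 2 < p"
  shows "summable (\<lambda>k. gap k powr p)"
proof (rule summable_comparison_test)
  have "summable (\<lambda>k. real k powr (- 2 * p))"
    using assms by (subst summable_real_powr_iff) auto
  then show "summable (\<lambda>k. real (Suc k) powr (- 2 * p))"
    by (subst summable_Suc_iff)
  have "gap k \<le> real (Suc k) powr (- 2)" for k
  proof -
    have "2 * (real (Suc k) * real (Suc k)) \<le> (2 * real k + 1) * (2 * real k + 3)"
      by (simp add: algebra_simps)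
    then show ?thesis
      by (simp add: gap_def powr_minus divide_simps power2_eq_square add_pos_pos
          powr_realpow[symmetric] del: of_nat_Suc)
  qed
  then have "gap k powr p \<le> real (Suc k) powr (- 2 * p)" for k
    using assms gap_pos[of k] powr_mono2[of p "gap k" "real (Suc k) powr (- 2)"]
    by (simp add: powr_powr less_imp_le)
  then show "\<exists>N. \<forall>k\<ge>N. norm (gap k powr p) \<le> real (Suc k) powr (- 2 * p)"
    by auto
qed

text \<open>The maximal function of a delta at \<open>m\<close> jumps by \<open>gap (jump_index (n - m))\<close> between
  \<open>n\<close> and \<open>n + 1\<close>, and \<open>jump_index\<close> folds \<open>\<int>\<close> two-to-one onto \<open>\<nat>\<close>.\<close>

definition jump_index :: "int \<Rightarrow> nat" where
  "jump_index j = (if 0 \<le> j then nat j else nat (- j - 1))"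

definition jump_weight :: "real \<Rightarrow> int \<Rightarrow> real" where
  "jump_weight p j = gap (jump_index j) powr p"

lemma jump_weight_nonneg: "0 \<le> jump_weight p j"
  by (simp add: jump_weight_def)

lemma has_sum_jump_weight_halves:
  "(jump_weight p has_sum S) {j. 0 \<le> j} \<longleftrightarrow> ((\<lambda>k. gap k powr p) has_sum S) UNIV"
  "(jump_weight p has_sum S) {j. j < 0} \<longleftrightarrow> ((\<lambda>k. gap k powr p) has_sum S) UNIV"
proof -
  have "bij_betw (\<lambda>k. int k) UNIV {j. 0 \<le> j}"
    by (rule bij_betw_byWitness[where f' = nat]) auto
  from has_sum_reindex_bij_betw[OF this, where f = "jump_weight p", symmetric]
  show "(jump_weight p has_sum S) {j. 0 \<le> j} \<longleftrightarrow> ((\<lambda>k. gap k powr p) has_sum S) UNIV"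
    by (simp add: jump_weight_def jump_index_def)
  have "bij_betw (\<lambda>k. - int k - 1) UNIV {j. j < 0}"
    by (rule bij_betw_byWitness[where f' = "\<lambda>j. nat (- j - 1)"]) auto
  from has_sum_reindex_bij_betw[OF this, where f = "jump_weight p", symmetric]
  show "(jump_weight p has_sum S) {j. j < 0} \<longleftrightarrow> ((\<lambda>k. gap k powr p) has_sum S) UNIV"
    by (simp add: jump_weight_def jump_index_def)
qed

lemma jump_weight_has_sum:
  assumes "summable (\<lambda>k. gap k powr p)"
  shows "(jump_weight p has_sum 2 * (\<Sum>k. gap k powr p)) UNIV"
proof -
  have "((\<lambda>k. gap k powr p) has_sum (\<Sum>k. gap k powr p)) UNIV"
    using assms by (intro sums_nonneg_imp_has_sum) (auto simp: summable_sums)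
  then have "(jump_weight p has_sum (\<Sum>k. gap k powr p) + (\<Sum>k. gap k powr p))
      ({j. 0 \<le> j} \<union> {j. j < 0})"
    by (intro has_sum_Un_disjoint) (auto simp: has_sum_jump_weight_halves)
  moreover have "{j::int. 0 \<le> j} \<union> {j. j < 0} = UNIV" by auto
  ultimately show ?thesis by simp
qed

lemma summable_gap_powr_if_summable_jump_weight:
  assumes "jump_weight p summable_on UNIV"
  shows "summable (\<lambda>k. gap k powr p)"
proof -
  have "jump_weight p summable_on {j. 0 \<le> j}"
    using assms by (rule summable_on_subset) auto
  then have "(\<lambda>k. gap k powr p) summable_on UNIV"
    by (auto simp: summable_on_def has_sum_jump_weight_halves)
  then show ?thesis by (rule summable_on_imp_summable)
qed

definition ball_avg :: "(int \<Rightarrow> real) \<Rightarrow> int \<Rightarrow> nat \<Rightarrow> real" where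
  "ball_avg f n r = (\<Sum>m\<in>{n - int r..n + int r}. \<bar>f m\<bar>) / (2 * real r + 1)"

lemma maxfun_eq_SUP_ball_avg: "maxfun f n = (SUP r. ball_avg f n r)"
proof -
  have "(\<Sum>k\<in>{- int r..int r}. \<bar>f (n + k)\<bar>) = (\<Sum>m\<in>{n - int r..n + int r}. \<bar>f m\<bar>)" for r
    by (rule sum.reindex_bij_witness[where i = "\<lambda>m. m - n" and j = "\<lambda>k. n + k"]) auto
  then show ?thesis by (simp add: maxfun_def ball_avg_def)
qed

lemma abs_le_lpnorm:
  assumes "in_lp p f" "0 < p"
  shows "\<bar>f m\<bar> \<le> lpnorm p f"
proof -
  have "\<bar>f m\<bar> powr p \<le> (\<Sum>\<^sub>\<infinity>n. \<bar>f n\<bar> powr p)"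
    using infsum_mono_neutral[of "\<lambda>n. \<bar>f n\<bar> powr p" "{m}" _ UNIV] assms by (simp add: in_lp_def)
  then have "(\<bar>f m\<bar> powr p) powr (1 / p) \<le> lpnorm p f"
    using assms by (simp add: lpnorm_def powr_mono2)
  then show ?thesis using assms by (simp add: powr_powr)
qed

lemma bdd_above_ball_avg:
  assumes "in_lp p f" "0 < p"
  shows "bdd_above (range (ball_avg f n))"
proof (rule bdd_aboveI2)
  fix r
  have "(\<Sum>m\<in>{n - int r..n + int r}. \<bar>f m\<bar>) \<le> card {n - int r..n + int r} * lpnorm p f"
    using abs_le_lpnorm[OF assms] by (intro sum_bounded_above) auto
  then show "ball_avg f n r \<le> lpnorm p f"
    by (simp add: ball_avg_def pos_divide_le_eq add_pos_pos algebra_simps)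
qed

lemma ball_avg_le_maxfun_neighbour:
  assumes "bdd_above (range (ball_avg f n'))" "\<bar>n' - n\<bar> \<le> 1"
  shows "ball_avg f n r \<le> maxfun f n' + gap r * (\<Sum>m\<in>{n - int r..n + int r}. \<bar>f m\<bar>)"
proof -
  define S where "S = (\<Sum>m\<in>{n - int r..n + int r}. \<bar>f m\<bar>)"
  have "S \<le> (\<Sum>m\<in>{n' - int (Suc r)..n' + int (Suc r)}. \<bar>f m\<bar>)"
    unfolding S_def by (rule sum_mono2) (use assms(2) in auto)
  then have "S / (2 * real r + 3) \<le> ball_avg f n' (Suc r)"
    by (simp add: ball_avg_def divide_right_mono add.commute add.left_commute)
  also have "\<dots> \<le> maxfun f n'"
    unfolding maxfun_eq_SUP_ball_avg by (rule cSUP_upper) (use assms(1) in auto)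
  finally have "S / (2 * real r + 3) \<le> maxfun f n'" .
  moreover have "ball_avg f n r = S / (2 * real r + 3) + gap r * S"
    by (simp add: ball_avg_def S_def gap_eq_diff left_diff_distrib)
  ultimately show ?thesis by (simp add: S_def)
qed

definition jump_majorant :: "real \<Rightarrow> (int \<Rightarrow> real) \<Rightarrow> int \<Rightarrow> real" where
  "jump_majorant p f n = (\<Sum>\<^sub>\<infinity>m. jump_weight p (n - m) * \<bar>f m\<bar> powr p)"

text \<open>When \<open>jump_index (n - m) < r\<close>, a ball of radius \<open>r\<close> uses at most
  \<open>gap (Suc (jump_index (n - m))) powr p\<close> of the weight of \<open>m\<close> in \<open>jump_majorant p f n\<close>;
  the rest is slack.\<close>

definition slack :: "real \<Rightarrow> (int \<Rightarrow> real) \<Rightarrow> int \<Rightarrow> int \<Rightarrow> real" where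
  "slack p f n m =
     (jump_weight p (n - m) - gap (Suc (jump_index (n - m))) powr p) * \<bar>f m\<bar> powr p"

lemma slack_nonneg: "0 < p \<Longrightarrow> 0 \<le> slack p f n m"
  by (simp add: slack_def jump_weight_def gap_powr_antimono)

lemma slack_pos: "0 < p \<Longrightarrow> f m \<noteq> 0 \<Longrightarrow> 0 < slack p f n m"
  by (simp add: slack_def jump_weight_def gap_powr_strict_antimono)

lemma ball_powr_plus_slack_le_majorant:
  fixes p :: real
  assumes p: "0 < p" "p \<le> 1"
    and summable: "(\<lambda>m. jump_weight p (n - m) * \<bar>f m\<bar> powr p) summable_on UNIV"
    and K: "finite K" "\<And>m. m \<in> K \<Longrightarrow> jump_index (n - m) \<le> r"
      "\<And>m. m \<in> K \<Longrightarrow> m \<noteq> q \<Longrightarrow> jump_index (n - m) < r"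
    and "m0 \<noteq> q"
  shows "(gap r * (\<Sum>m\<in>K. \<bar>f m\<bar>)) powr p + slack p f n m0 \<le> jump_majorant p f n"
proof -
  define T where "T m = jump_weight p (n - m) * \<bar>f m\<bar> powr p" for m
  define U where "U m = gap r powr p * \<bar>f m\<bar> powr p" for m
  have "(gap r * (\<Sum>m\<in>K. \<bar>f m\<bar>)) powr p \<le> (\<Sum>m\<in>K. (gap r * \<bar>f m\<bar>) powr p)"
    using p K(1) gap_pos[of r] by (simp add: sum_distrib_left powr_sum_le_sum_powr)
  also have "\<dots> = sum U K"
    using gap_pos[of r] by (simp add: U_def powr_mult)
  also have "\<dots> = sum U (K - {m0}) + (if m0 \<in> K then U m0 else 0)"
    using K(1) by (simp add: sum_diff1)
  finally have "(gap r * (\<Sum>m\<in>K. \<bar>f m\<bar>)) powr p + slack p f n m0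
      \<le> sum U (K - {m0}) + ((if m0 \<in> K then U m0 else 0) + slack p f n m0)"
    by simp
  also have "\<dots> \<le> sum T (K - {m0}) + T m0"
  proof (rule add_mono)
    show "sum U (K - {m0}) \<le> sum T (K - {m0})"
      using K(2) p by (intro sum_mono) (simp add: U_def T_def jump_weight_def gap_powr_antimono
          mult_right_mono)
    have "m0 \<in> K \<Longrightarrow> U m0 \<le> gap (Suc (jump_index (n - m0))) powr p * \<bar>f m0\<bar> powr p"
      using K(3) \<open>m0 \<noteq> q\<close> p by (simp add: U_def gap_powr_antimono Suc_le_eq mult_right_mono)
    moreover have "T m0 = gap (Suc (jump_index (n - m0))) powr p * \<bar>f m0\<bar> powr p + slack p f n m0"
      by (simp add: T_def slack_def algebra_simps)
    ultimately show "(if m0 \<in> K then U m0 else 0) + slack p f n m0 \<le> T m0"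
      by auto
  qed
  also have "\<dots> = sum T (insert m0 K)"
    using K(1) by (simp add: sum.insert_remove)
  also have "\<dots> \<le> jump_majorant p f n"
    using infsum_mono_neutral[of T "insert m0 K" T UNIV] summable K(1)
    by (simp add: T_def[abs_def] jump_majorant_def jump_weight_nonneg)
  finally show ?thesis .
qed

lemma jump_powr_le_majorant_minus_slack:
  fixes p :: real
  assumes p: "0 < p" "p \<le> 1" and f: "in_lp p f"
    and summable: "(\<lambda>m. jump_weight p (n - m) * \<bar>f m\<bar> powr p) summable_on UNIV"
    and slack: "\<And>q. \<exists>m0. m0 \<noteq> q \<and> G \<le> slack p f n m0"
  shows "\<bar>maxfun f (n + 1) - maxfun f n\<bar> powr p \<le> jump_majorant p f n - G"
proof -
  define D where "D = jump_majorant p f n - G"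
  define X where "X = D powr (1 / p)"
  have ball_powr: "(gap r * (\<Sum>m\<in>{c - int r..c + int r}. \<bar>f m\<bar>)) powr p \<le> D"
    if "c = n \<or> c = n + 1" for c r
  proof -
    define q where "q = (if c = n then n - int r else n + 1 + int r)"
      \<comment> \<open>the only point \<open>m\<close> of the ball with \<open>jump_index (n - m) = r\<close>\<close>
    obtain m0 where "m0 \<noteq> q" "G \<le> slack p f n m0"
      using slack by blast
    moreover have "jump_index (n - m) \<le> r" "m \<noteq> q \<Longrightarrow> jump_index (n - m) < r"
      if "m \<in> {c - int r..c + int r}" for m
      using that \<open>c = n \<or> c = n + 1\<close> by (auto simp: q_def jump_index_def)
    ultimately show ?thesis
      using ball_powr_plus_slack_le_majorant[OF p summable, of "{c - int r..c + int r}" r q m0]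
      by (simp add: D_def)
  qed
  have "0 \<le> D"
    using ball_powr[of n 0] by (meson order_trans powr_ge_zero)
  have ball: "gap r * (\<Sum>m\<in>{c - int r..c + int r}. \<bar>f m\<bar>) \<le> X"
    if "c = n \<or> c = n + 1" for c r
  proof -
    have "0 \<le> gap r * (\<Sum>m\<in>{c - int r..c + int r}. \<bar>f m\<bar>)"
      using gap_pos[of r] by (simp add: sum_nonneg)
    then show ?thesis
      using powr_mono2[OF _ _ ball_powr[OF that], of "1 / p" r] p by (simp add: X_def powr_powr)
  qed
  have "(SUP r. ball_avg f c r) \<le> maxfun f c' + X"
    if "c = n \<and> c' = n + 1 \<or> c = n + 1 \<and> c' = n" for c c'
  proof (rule cSUP_least)
    fix r
    show "ball_avg f c r \<le> maxfun f c' + X"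
      using ball_avg_le_maxfun_neighbour[OF bdd_above_ball_avg[OF f p(1)], of c' c r] ball[of c r] that
      by auto
  qed simp
  from this[of n "n + 1"] this[of "n + 1" n]
  have "\<bar>maxfun f (n + 1) - maxfun f n\<bar> \<le> X"
    unfolding maxfun_eq_SUP_ball_avg by linarith
  then have "\<bar>maxfun f (n + 1) - maxfun f n\<bar> powr p \<le> X powr p"
    using p by (simp add: powr_mono2)
  also have "X powr p = D"
    using \<open>0 \<le> D\<close> p by (simp add: X_def powr_powr)
  finally show ?thesis by (simp add: D_def)
qed

lemma ex_slack_nonneg_avoiding: "0 < p \<Longrightarrow> \<exists>m0. m0 \<noteq> q \<and> 0 \<le> slack p f n m0"
  using slack_nonneg by (intro exI[of _ "q + 1"]) auto

lemma jump_powr_summable_and_le: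
  fixes p :: real
  assumes p: "0 < p" "p \<le> 1" and f: "in_lp p f" and gap: "summable (\<lambda>k. gap k powr p)"
    and slack: "\<And>q. \<exists>m0. m0 \<noteq> q \<and> G \<le> slack p f n0 m0"
  shows "(\<lambda>n. \<bar>maxfun f (n + 1) - maxfun f n\<bar> powr p) summable_on UNIV"
    and "(\<Sum>\<^sub>\<infinity>n. \<bar>maxfun f (n + 1) - maxfun f n\<bar> powr p) + G
          \<le> 2 * (\<Sum>k. gap k powr p) * (\<Sum>\<^sub>\<infinity>m. \<bar>f m\<bar> powr p)"
proof -
  define V where "V n = \<bar>maxfun f (n + 1) - maxfun f n\<bar> powr p" for n
  have "((\<lambda>m. \<bar>f m\<bar> powr p) has_sum (\<Sum>\<^sub>\<infinity>m. \<bar>f m\<bar> powr p)) UNIV"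
    using f by (simp add: in_lp_def)
  note conv = has_sum_convolution_nonneg[OF jump_weight_has_sum[OF gap] this jump_weight_nonneg]
  have majorant: "(jump_majorant p f has_sum
      2 * (\<Sum>k. gap k powr p) * (\<Sum>\<^sub>\<infinity>m. \<bar>f m\<bar> powr p)) UNIV"
    using conv(2) by (simp add: jump_majorant_def[abs_def])
  have V_le_majorant: "V n \<le> jump_majorant p f n" for n
    using jump_powr_le_majorant_minus_slack[OF p f conv(1) ex_slack_nonneg_avoiding[OF p(1)]]
    by (simp add: V_def)
  moreover have "V n0 + G \<le> jump_majorant p f n0"
    using jump_powr_le_majorant_minus_slack[OF p f conv(1) slack] by (simp add: V_def)
  ultimately have V_le: "V n + (if n = n0 then G else 0) \<le> jump_majorant p f n" for n
    by simp
  have "V summable_on UNIV"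
    using V_le_majorant
    by (intro summable_on_comparison_test[OF has_sum_imp_summable[OF majorant]]) (auto simp: V_def)
  then show "(\<lambda>n. \<bar>maxfun f (n + 1) - maxfun f n\<bar> powr p) summable_on UNIV"
    by (simp add: V_def[abs_def])
  then have "((\<lambda>n. V n + (if n = n0 then G else 0)) has_sum infsum V UNIV + G) UNIV"
    by (intro has_sum_add has_sum_delta) (simp add: V_def[abs_def])
  from has_sum_mono[OF this majorant] V_le
  show "(\<Sum>\<^sub>\<infinity>n. \<bar>maxfun f (n + 1) - maxfun f n\<bar> powr p) + G
      \<le> 2 * (\<Sum>k. gap k powr p) * (\<Sum>\<^sub>\<infinity>m. \<bar>f m\<bar> powr p)"
    by (simp add: V_def[abs_def])
qed

lemma Cp_mult_lpnorm:
  assumes "0 < p" "summable (\<lambda>k. gap k powr p)"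
  shows "Cp p * ereal (lpnorm p f)
    = ereal ((2 * (\<Sum>k. gap k powr p) * (\<Sum>\<^sub>\<infinity>m. \<bar>f m\<bar> powr p)) powr (1 / p))"
proof -
  have "0 \<le> (\<Sum>k. gap k powr p)"
    using assms(2) by (simp add: suminf_nonneg)
  moreover have "0 \<le> (\<Sum>\<^sub>\<infinity>m. \<bar>f m\<bar> powr p)"
    by (simp add: infsum_nonneg)
  ultimately show ?thesis
    using assms by (simp add: Cp_eq lpnorm_def powr_mult)
qed

lemma varp_maxfun_le:
  fixes p :: real
  assumes p: "0 < p" "p \<le> 1" and f: "in_lp p f"
  shows "varp p (maxfun f) \<le> Cp p * ereal (lpnorm p f)"
proof (cases "summable (\<lambda>k. gap k powr p)")
  case True
  define V where "V = (\<Sum>\<^sub>\<infinity>n. \<bar>maxfun f (n + 1) - maxfun f n\<bar> powr p)"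
  note bound = jump_powr_summable_and_le[OF p f True ex_slack_nonneg_avoiding[OF p(1)]]
  have "varp p (maxfun f) = ereal (V powr (1 / p))"
    using bound(1) by (simp add: varp_def V_def)
  moreover have "V powr (1 / p) \<le> (2 * (\<Sum>k. gap k powr p) * (\<Sum>\<^sub>\<infinity>m. \<bar>f m\<bar> powr p)) powr (1 / p)"
    using bound(2) p by (intro powr_mono2) (auto simp: V_def infsum_nonneg)
  ultimately show ?thesis
    by (simp add: Cp_mult_lpnorm[OF p(1) True])
next
  case False
  then have "Cp p = \<infinity>"
    by (simp add: Cp_eq)
  show ?thesis
  proof (cases "lpnorm p f = 0")
    case True
    then have "(\<Sum>\<^sub>\<infinity>m. \<bar>f m\<bar> powr p) = 0"
      by (simp add: lpnorm_def)
    then have "\<bar>f m\<bar> powr p = 0" for m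
      using f by (intro nonneg_infsum_le_0D[where A = UNIV]) (auto simp: in_lp_def)
    then have "f = (\<lambda>_. 0)"
      by auto
    then show ?thesis
      using True by (simp add: varp_def maxfun_def flip: zero_ereal_def)
  next
    case False
    then have "0 < lpnorm p f"
      by (simp add: lpnorm_def order_less_le)
    then show ?thesis
      using \<open>Cp p = \<infinity>\<close> by simp
  qed
qed

lemma varp_maxfun_less:
  fixes p :: real
  assumes p: "0 < p" "p \<le> 1" and f: "in_lp p f" and gap: "summable (\<lambda>k. gap k powr p)"
    and two: "m1 \<noteq> m2" "f m1 \<noteq> 0" "f m2 \<noteq> 0"
  shows "varp p (maxfun f) < Cp p * ereal (lpnorm p f)"
proof -
  define G where "G = min (slack p f 0 m1) (slack p f 0 m2)"
  have "0 < G"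
    using slack_pos[OF p(1)] two by (simp add: G_def)
  have "\<exists>m0. m0 \<noteq> q \<and> G \<le> slack p f 0 m0" for q
    using two(1) by (intro exI[of _ "if q = m1 then m2 else m1"]) (auto simp: G_def)
  note bound = jump_powr_summable_and_le[OF p f gap this]
  define V where "V = (\<Sum>\<^sub>\<infinity>n. \<bar>maxfun f (n + 1) - maxfun f n\<bar> powr p)"
  have "varp p (maxfun f) = ereal (V powr (1 / p))"
    using bound(1) by (simp add: varp_def V_def)
  moreover have "V powr (1 / p) < (2 * (\<Sum>k. gap k powr p) * (\<Sum>\<^sub>\<infinity>m. \<bar>f m\<bar> powr p)) powr (1 / p)"
    using bound(2) \<open>0 < G\<close> p by (intro powr_less_mono2) (auto simp: V_def infsum_nonneg)
  ultimately show ?thesis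
    by (simp add: Cp_mult_lpnorm[OF p(1) gap])
qed

lemma not_delta_obtains_two_nonzero:
  assumes "f \<noteq> (\<lambda>_. 0)" "\<nexists>m c. c \<noteq> 0 \<and> f = (\<lambda>n. if n = m then c else 0)"
  obtains m1 m2 where "m1 \<noteq> m2" "f m1 \<noteq> 0" "f m2 \<noteq> 0"
proof -
  obtain m1 where "f m1 \<noteq> 0"
    using assms(1) by auto
  moreover from this assms(2) have "f \<noteq> (\<lambda>n. if n = m1 then f m1 else 0)"
    by blast
  then obtain m2 where "f m2 \<noteq> (if m2 = m1 then f m1 else 0)"
    by auto
  ultimately show thesis
    using that[of m1 m2] by (auto split: if_splits)
qed

lemma maxfun_delta:
  "maxfun (\<lambda>x. if x = m then c else 0) n = \<bar>c\<bar> / (2 * real (nat \<bar>n - m\<bar>) + 1)"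
proof -
  define e where "e = nat \<bar>n - m\<bar>"
  have avg: "ball_avg (\<lambda>x. if x = m then c else 0) n r
      = (if e \<le> r then \<bar>c\<bar> else 0) / (2 * real r + 1)" for r
  proof -
    have "(\<Sum>x\<in>{n - int r..n + int r}. \<bar>if x = m then c else 0\<bar>)
        = (\<Sum>x\<in>{n - int r..n + int r}. if x = m then \<bar>c\<bar> else 0)"
      by (rule sum.cong) auto
    also have "\<dots> = (if e \<le> r then \<bar>c\<bar> else 0)"
      by (auto simp: e_def)
    finally show ?thesis
      by (simp add: ball_avg_def)
  qed
  have le: "ball_avg (\<lambda>x. if x = m then c else 0) n r \<le> \<bar>c\<bar> / (2 * real e + 1)" for r
    unfolding avg by (auto intro!: divide_left_mono)
  have "\<bar>c\<bar> / (2 * real e + 1) = ball_avg (\<lambda>x. if x = m then c else 0) n e"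
    by (simp add: avg)
  also have "\<dots> \<le> (SUP r. ball_avg (\<lambda>x. if x = m then c else 0) n r)"
    by (rule cSUP_upper) (auto intro: bdd_aboveI2[OF le])
  finally show ?thesis
    unfolding maxfun_eq_SUP_ball_avg e_def[symmetric]
    by (intro antisym cSUP_least le) auto
qed

lemma nat_abs_succ_jump_index:
  "nat \<bar>j + 1\<bar> = Suc (jump_index j) \<and> nat \<bar>j\<bar> = jump_index j \<or>
   nat \<bar>j + 1\<bar> = jump_index j \<and> nat \<bar>j\<bar> = Suc (jump_index j)"
  unfolding jump_index_def by (cases "0 \<le> j"; simp; presburger)

lemma jump_maxfun_delta:
  "\<bar>maxfun (\<lambda>x. if x = m then c else 0) (n + 1) - maxfun (\<lambda>x. if x = m then c else 0) n\<bar>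
     = \<bar>c\<bar> * gap (jump_index (n - m))"
proof -
  define k where "k = jump_index (n - m)"
  have "\<bar>c\<bar> / (2 * real k + 1) - \<bar>c\<bar> / (2 * real (Suc k) + 1) = \<bar>c\<bar> * gap k"
    by (simp add: gap_eq_diff right_diff_distrib add_ac)
  moreover have "\<bar>c\<bar> / (2 * real (Suc k) + 1) \<le> \<bar>c\<bar> / (2 * real k + 1)"
    by (simp add: frac_le)
  moreover have "nat \<bar>n + 1 - m\<bar> = Suc k \<and> nat \<bar>n - m\<bar> = k \<or>
      nat \<bar>n + 1 - m\<bar> = k \<and> nat \<bar>n - m\<bar> = Suc k"
    using nat_abs_succ_jump_index[of "n - m"] by (simp add: k_def diff_add_eq)
  ultimately show ?thesis
    unfolding maxfun_delta k_def[symmetric] by (elim disjE) (simp_all add: abs_minus_commute)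
qed

lemma has_sum_powr_abs_delta:
  fixes c p :: real
  shows "((\<lambda>n. \<bar>if n = m then c else 0\<bar> powr p) has_sum \<bar>c\<bar> powr p) UNIV"
proof -
  have "(\<lambda>n. \<bar>if n = m then c else 0\<bar> powr p) = (\<lambda>n. if n = m then \<bar>c\<bar> powr p else 0)"
    by auto
  then show ?thesis
    using has_sum_delta by simp
qed

lemma in_lp_delta: "in_lp p (\<lambda>n. if n = m then c else 0)"
  unfolding in_lp_def using has_sum_powr_abs_delta by (rule has_sum_imp_summable)

lemma lpnorm_delta:
  assumes "0 < p"
  shows "lpnorm p (\<lambda>n. if n = m then c else 0) = \<bar>c\<bar>"
proof -
  have "(\<Sum>\<^sub>\<infinity>n. \<bar>if n = m then c else 0\<bar> powr p) = \<bar>c\<bar> powr p"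
    by (rule infsumI[OF has_sum_powr_abs_delta])
  then show ?thesis
    using assms by (simp add: lpnorm_def powr_powr)
qed

lemma varp_maxfun_delta:
  fixes c p :: real
  assumes p: "0 < p" and "c \<noteq> 0"
  shows "varp p (maxfun (\<lambda>n. if n = m then c else 0))
    = Cp p * ereal (lpnorm p (\<lambda>n. if n = m then c else 0))"
proof -
  define g where "g = maxfun (\<lambda>n. if n = m then c else 0)"
  have jumps: "(\<lambda>n. \<bar>g (n + 1) - g n\<bar> powr p) = (\<lambda>n. \<bar>c\<bar> powr p * jump_weight p (n - m))"
    using gap_pos by (simp add: g_def jump_maxfun_delta jump_weight_def powr_mult less_imp_le)
  show ?thesis
  proof (cases "summable (\<lambda>k. gap k powr p)")
    case True
    define W where "W = 2 * (\<Sum>k. gap k powr p)"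
    have "0 \<le> W"
      using True by (simp add: W_def suminf_nonneg)
    have "((\<lambda>n. jump_weight p (n - m)) has_sum W) UNIV"
      using jump_weight_has_sum[OF True] by (simp add: has_sum_shift W_def)
    then have "((\<lambda>n. \<bar>g (n + 1) - g n\<bar> powr p) has_sum \<bar>c\<bar> powr p * W) UNIV"
      unfolding jumps by (rule has_sum_cmult_right)
    then have "varp p g = ereal ((\<bar>c\<bar> powr p * W) powr (1 / p))"
      by (simp add: varp_def has_sum_imp_summable infsumI)
    also have "(\<bar>c\<bar> powr p * W) powr (1 / p) = \<bar>c\<bar> * W powr (1 / p)"
      using p \<open>0 \<le> W\<close> by (simp add: powr_mult powr_powr)
    finally show ?thesis
      using p True by (simp add: g_def Cp_eq lpnorm_delta W_def mult.commute)
  next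
    case False
    have "\<not> (\<lambda>n. \<bar>g (n + 1) - g n\<bar> powr p) summable_on UNIV"
    proof
      assume "(\<lambda>n. \<bar>g (n + 1) - g n\<bar> powr p) summable_on UNIV"
      then have "(\<lambda>n. jump_weight p (n - m)) summable_on UNIV"
        using summable_on_cmult_right'[of "\<bar>c\<bar> powr p" "\<lambda>n. jump_weight p (n - m)"] \<open>c \<noteq> 0\<close>
        by (simp add: jumps)
      then have "jump_weight p summable_on UNIV"
        by (simp add: summable_on_def has_sum_shift)
      then show False
        using False summable_gap_powr_if_summable_jump_weight by blast
    qed
    then show ?thesis
      using False \<open>c \<noteq> 0\<close> p by (simp add: varp_def g_def[symmetric] Cp_eq lpnorm_delta)
  qed
qed

lemma varp_maxfun_eq_iff_delta:
  fixes p :: real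
  assumes p: "1 / 2 < p" "p \<le> 1" and f: "in_lp p f" "f \<noteq> (\<lambda>_. 0)"
  shows "varp p (maxfun f) = Cp p * ereal (lpnorm p f) \<longleftrightarrow>
    (\<exists>m c. c \<noteq> 0 \<and> f = (\<lambda>n. if n = m then c else 0))"
proof
  assume equality: "varp p (maxfun f) = Cp p * ereal (lpnorm p f)"
  show "\<exists>m c. c \<noteq> 0 \<and> f = (\<lambda>n. if n = m then c else 0)"
  proof (rule ccontr)
    assume "\<nexists>m c. c \<noteq> 0 \<and> f = (\<lambda>n. if n = m then c else 0)"
    with f obtain m1 m2 where two: "m1 \<noteq> m2" "f m1 \<noteq> 0" "f m2 \<noteq> 0"
      using not_delta_obtains_two_nonzero by blast
    have "varp p (maxfun f) < Cp p * ereal (lpnorm p f)"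
      using p by (intro varp_maxfun_less[OF _ p(2) f(1) summable_gap_powr[OF p(1)] two]) auto
    with equality show False
      by simp
  qed
next
  assume "\<exists>m c. c \<noteq> 0 \<and> f = (\<lambda>n. if n = m then c else 0)"
  then obtain m c where "c \<noteq> 0" "f = (\<lambda>n. if n = m then c else 0)"
    by blast
  then show "varp p (maxfun f) = Cp p * ereal (lpnorm p f)"
    using p varp_maxfun_delta[of p c m] by simp
qed

theorem theorem5p1:
  fixes p :: real
  assumes "0 < p" and "p \<le> 1"
  shows "(\<forall>f. in_lp p f \<longrightarrow> varp p (maxfun f) \<le> Cp p * ereal (lpnorm p f))
       \<and> (\<forall>C::real. ereal C < Cp p \<longrightarrow>
            (\<exists>f. in_lp p f \<and> varp p (maxfun f) > ereal C * ereal (lpnorm p f)))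
       \<and> (1/2 < p \<longrightarrow> (\<forall>f. in_lp p f \<and> f \<noteq> (\<lambda>_. 0) \<longrightarrow>
            (varp p (maxfun f) = Cp p * ereal (lpnorm p f) \<longleftrightarrow>
             (\<exists>m c. c \<noteq> 0 \<and> f = (\<lambda>n. if n = m then c else 0)))))"
proof (intro conjI allI impI)
  fix f
  assume "in_lp p f"
  then show "varp p (maxfun f) \<le> Cp p * ereal (lpnorm p f)"
    using varp_maxfun_le assms by blast
next
  fix C :: real
  assume "ereal C < Cp p"
  let ?delta = "\<lambda>n::int. if n = 0 then 1 else 0 :: real"
  have "varp p (maxfun ?delta) = Cp p" "lpnorm p ?delta = 1"
    using varp_maxfun_delta[OF assms(1), of 1 0] lpnorm_delta[OF assms(1), of 0 1] by simp_all
  then show "\<exists>f. in_lp p f \<and> varp p (maxfun f) > ereal C * ereal (lpnorm p f)"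
    using \<open>ereal C < Cp p\<close> in_lp_delta by (intro exI[of _ ?delta]) auto
next
  fix f
  assume "1/2 < p" "in_lp p f \<and> f \<noteq> (\<lambda>_. 0)"
  then show "varp p (maxfun f) = Cp p * ereal (lpnorm p f) \<longleftrightarrow>
      (\<exists>m c. c \<noteq> 0 \<and> f = (\<lambda>n. if n = m then c else 0))"
    using varp_maxfun_eq_iff_delta[OF \<open>1/2 < p\<close> assms(2)] by simp
qed

end
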